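(* Let $d\ge1$ and let $\{\vec X_\varepsilon\}_{\varepsilon>0}$ be $\mathbb R^d$-valued random vectors such that $\vec X_\varepsilon\to\vec X$ in distribution as $\varepsilon\to0$ for some random vector $\vec X$. Suppose there is a continuous, strictly positive, integrable function $f:\mathbb R^d\to(0,\infty)$ such that for every compact $\mathcal K\subseteq\mathbb R^d$, uniformly over $\vec x,\vec y\in\mathcal K$, as $\varepsilon\to0$, $$\frac{\mathbb P\bigl(\vec X_\varepsilon\in\vec x+[-\varepsilon,\varepsilon)^d\bigr)}{\mathbb P\bigl(\vec X_\varepsilon\in\vec y+[-\varepsilon,\varepsilon)^d\bigr)}\cdot\frac{f(\vec y)}{f(\vec x)}\to1.$$ Then $\vec X$ is absolutely continuous with respect to Lebesgue measure on $\mathbb R^d$, with density $f(\vec x)/\int_{\mathbb R^d}f(\vec z)\,d\vec z$. *)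

theory Defs
  imports "HOL-Probability.Probability"
begin

definition half_open_cube :: "real^'n \<Rightarrow> real \<Rightarrow> (real^'n) set" where
  "half_open_cube x e = {y. \<forall>i. x$i - e \<le> y$i \<and> y$i < x$i + e}"

definition conv_distr_at0 :: "(real \<Rightarrow> 'a::topological_space measure) \<Rightarrow> 'a measure \<Rightarrow> bool" where
  "conv_distr_at0 \<mu> \<nu> \<longleftrightarrow>
     (\<forall>g::'a \<Rightarrow> real. continuous_on UNIV g \<and> bounded (range g) \<longrightarrow>
        ((\<lambda>e. \<integral>x. g x \<partial>(\<mu> e)) \<longlongrightarrow> (\<integral>x. g x \<partial>\<nu>)) (at_right 0))"

end

theory Submission
  imports Defs
begin

text \<open>Let p_e(x) be the probability that X_e lies in the cube x + [-e,e)^d. By Fubini, the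
  integral of h(x) p_e(x) dx is the expectation of the integral of h over the set of centres of
  cubes containing X_e, so for a nonnegative Lipschitz bump h its quotient by (2e)^d tends to
  E h(X) by convergence in distribution. The ratio hypothesis says that p_e is uniformly close to
  A_e f on compact sets, where A_e = p_e(0) / f(0), so the same integral divided by A_e tends to
  the integral of h f. Comparing the two limits for one fixed bump shows that A_e / (2e)^d
  converges to some L, and then E h(X) = L * (integral of h f) for every bump. Bumps approximate
  indicators of open boxes from below, hence the law of X has density L f, and L is the
  reciprocal of the integral of f because that law is a probability measure.\<close>

lemma abs_divide_diff_le:
  fixes a b c K :: real
  assumes "c > 0" "\<bar>a - c * b\<bar> \<le> c * K"
  shows "\<bar>a / c - b\<bar> \<le> K"
proof -
  have "a / c - b = (a - c * b) / c" using assms(1) by (simp add: diff_divide_distrib)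
  then show ?thesis using assms by (simp add: abs_divide pos_divide_le_eq mult.commute)
qed

lemma integrable_bounded_mult:
  fixes f g :: "'a \<Rightarrow> real"
  assumes "integrable M f" "g \<in> borel_measurable M" "\<And>x. x \<in> space M \<Longrightarrow> \<bar>g x\<bar> \<le> B"
  shows "integrable M (\<lambda>x. g x * f x)"
proof (rule Bochner_Integration.integrable_bound)
  show "integrable M (\<lambda>x. B * \<bar>f x\<bar>)" using assms(1) by auto
  show "(\<lambda>x. g x * f x) \<in> borel_measurable M" using assms by auto
  show "AE x in M. norm (g x * f x) \<le> norm (B * \<bar>f x\<bar>)"
  proof (rule AE_I2)
    fix x assume "x \<in> space M"
    then have "\<bar>g x\<bar> \<le> \<bar>B\<bar>" using assms(3) by force
    then show "norm (g x * f x) \<le> norm (B * \<bar>f x\<bar>)" by (simp add: abs_mult mult_right_mono)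
  qed
qed

section \<open>Averages over half-open cubes\<close>

lemma half_open_cube_relation_in_borel:
  "{z :: (real^'n) \<times> (real^'n). snd z \<in> half_open_cube (fst z) e} \<in> sets borel"
proof -
  have "{z :: (real^'n) \<times> (real^'n). snd z \<in> half_open_cube (fst z) e}
      = (\<Inter>i. {z. fst z $ i - e \<le> snd z $ i}) \<inter> (\<Inter>i. {z. snd z $ i < fst z $ i + e})"
    unfolding half_open_cube_def by auto
  moreover have "closed (\<Inter>i. {z :: (real^'n) \<times> (real^'n). fst z $ i - e \<le> snd z $ i})"
    by (intro closed_INT ballI closed_Collect_le continuous_intros)
  moreover have "open (\<Inter>i. {z :: (real^'n) \<times> (real^'n). snd z $ i < fst z $ i + e})"
    by (intro open_INT ballI open_Collect_less continuous_intros) simp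
  ultimately show ?thesis using sets.Int[OF borel_closed borel_open] by simp
qed

lemma half_open_cube_in_borel: "half_open_cube x e \<in> sets borel"
proof -
  have "Pair x -` {z. snd z \<in> half_open_cube (fst z) e} \<in> sets borel"
    using half_open_cube_relation_in_borel unfolding borel_prod[symmetric] by (rule sets_Pair1)
  then show ?thesis by simp
qed

definition cube_centres :: "real^'n \<Rightarrow> real \<Rightarrow> (real^'n) set" where
  "cube_centres y e = {x. y \<in> half_open_cube x e}"

lemma mem_cube_centres: "x \<in> cube_centres y e \<longleftrightarrow> (\<forall>i. y$i - e < x$i \<and> x$i \<le> y$i + e)"
proof -
  have "\<And>i. x$i - e \<le> y$i \<and> y$i < x$i + e \<longleftrightarrow> y$i - e < x$i \<and> x$i \<le> y$i + e" by linarith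
  then show ?thesis unfolding cube_centres_def half_open_cube_def by simp
qed

lemma cube_centres_in_borel: "cube_centres y e \<in> sets borel"
proof -
  have "(\<lambda>x. (x, y)) -` {z. snd z \<in> half_open_cube (fst z) e} \<in> sets borel"
    using half_open_cube_relation_in_borel unfolding borel_prod[symmetric] by (rule sets_Pair2)
  then show ?thesis by (simp add: cube_centres_def)
qed

lemma cube_centres_between_box_cbox:
  "box (\<chi> i. y$i - e) (\<chi> i. y$i + e) \<subseteq> cube_centres y e"
  "cube_centres y e \<subseteq> cbox (\<chi> i. y$i - e) (\<chi> i. y$i + e)"
  unfolding mem_cube_centres subset_iff mem_box_cart by (simp_all add: less_imp_le)

lemma emeasure_cube_centres:
  fixes y :: "real^'n"
  assumes "e > 0"
  shows "emeasure lborel (cube_centres y e) = ennreal ((2*e)^CARD('n))"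
proof -
  let ?a = "\<chi> i. y$i - e" and ?b = "\<chi> i. y$i + e"
  have "(\<Prod>b\<in>Basis. (?b - ?a) \<bullet> b) = (\<Prod>b\<in>(Basis :: (real^'n) set). 2*e)"
    by (rule prod.cong) (auto simp: Basis_vec_def inner_axis)
  then have vol: "(\<Prod>b\<in>Basis. (?b - ?a) \<bullet> b) = (2*e)^CARD('n)" by simp
  have "emeasure lborel (cbox ?a ?b) = ennreal ((2*e)^CARD('n))"
    using assms vol by (subst emeasure_lborel_cbox) (auto simp: Basis_vec_def inner_axis)
  moreover have "emeasure lborel (box ?a ?b) = ennreal ((2*e)^CARD('n))"
    using assms vol by (subst emeasure_lborel_box) (auto simp: Basis_vec_def inner_axis)
  moreover have "emeasure lborel (cube_centres y e) \<le> emeasure lborel (cbox ?a ?b)"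
    using cube_centres_between_box_cbox(2) by (rule emeasure_mono) simp
  moreover have "emeasure lborel (box ?a ?b) \<le> emeasure lborel (cube_centres y e)"
    using cube_centres_between_box_cbox(1) by (rule emeasure_mono) (simp add: cube_centres_in_borel)
  ultimately show ?thesis by (metis antisym)
qed

lemma dist_le_of_mem_cube_centres:
  fixes y :: "real^'n" and e :: real
  assumes "x \<in> cube_centres y e"
  shows "dist x y \<le> CARD('n) * e"
proof -
  have "dist x y \<le> (\<Sum>i\<in>UNIV. \<bar>(x - y)$i\<bar>)"
    unfolding dist_norm by (rule norm_le_l1_cart)
  also have "\<dots> \<le> (\<Sum>i\<in>(UNIV::'n set). e)"
  proof (intro sum_mono)
    fix i
    have "y$i - e < x$i \<and> x$i \<le> y$i + e" using assms by (simp add: mem_cube_centres)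
    then show "\<bar>(x - y)$i\<bar> \<le> e" by auto
  qed
  finally show ?thesis by simp
qed

lemma abs_integral_cube_centres_sub_le:
  fixes h :: "real^'n \<Rightarrow> real"
  assumes e: "e > 0" and lip: "C-lipschitz_on UNIV h"
  shows "\<bar>(\<integral>x. indicator (cube_centres y e) x * h x \<partial>lborel) - (2*e)^CARD('n) * h y\<bar>
           \<le> (2*e)^CARD('n) * (C * CARD('n) * e)"
proof -
  let ?S = "cube_centres y e"
  let ?d = "\<lambda>x. indicator ?S x * (h x - h y)"
  have S_meas: "measure lborel ?S = (2*e)^CARD('n)"
    using emeasure_cube_centres[OF e, of y] e by (simp add: measure_def)
  have int_S: "integrable lborel (indicator ?S :: _ \<Rightarrow> real)"
    using emeasure_cube_centres[OF e, of y] by (intro integrable_real_indicator) (auto simp: cube_centres_in_borel)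
  have h_meas: "h \<in> borel_measurable borel"
    using lip by (intro borel_measurable_continuous_onI lipschitz_on_continuous_on)
  have d_bound: "\<bar>?d x\<bar> \<le> C * CARD('n) * e * indicator ?S x" for x
  proof (cases "x \<in> ?S")
    case True
    have "\<bar>h x - h y\<bar> \<le> C * dist x y"
      using lipschitz_onD[OF lip] by (simp add: dist_real_def)
    also have "\<dots> \<le> C * (CARD('n) * e)"
      using dist_le_of_mem_cube_centres[OF True] lipschitz_on_nonneg[OF lip] by (rule mult_left_mono)
    finally show ?thesis using True by simp
  qed simp
  have int_d: "integrable lborel ?d"
  proof (rule Bochner_Integration.integrable_bound)
    show "integrable lborel (\<lambda>x. C * CARD('n) * e * indicator ?S x)" using int_S by simp
    show "?d \<in> borel_measurable lborel"
      using h_meas cube_centres_in_borel by (intro borel_measurable_times borel_measurable_indicator borel_measurable_diff) simp_all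
    show "AE x in lborel. norm (?d x) \<le> norm (C * CARD('n) * e * indicator ?S x)"
      using d_bound by (intro AE_I2) (metis abs_ge_self order_trans real_norm_def)
  qed
  have "(\<integral>x. indicator ?S x * h x \<partial>lborel) = (\<integral>x. ?d x + h y * indicator ?S x \<partial>lborel)"
    by (intro Bochner_Integration.integral_cong) (auto simp: indicator_def)
  also have "\<dots> = (\<integral>x. ?d x \<partial>lborel) + (2*e)^CARD('n) * h y"
    using int_d int_S S_meas by (simp add: mult.commute)
  finally have "\<bar>(\<integral>x. indicator ?S x * h x \<partial>lborel) - (2*e)^CARD('n) * h y\<bar> = \<bar>\<integral>x. ?d x \<partial>lborel\<bar>"
    by simp
  also have "\<dots> \<le> (\<integral>x. C * CARD('n) * e * indicator ?S x \<partial>lborel)"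
    using int_d int_S d_bound by (intro integral_abs_bound_integral) auto
  also have "\<dots> = (2*e)^CARD('n) * (C * CARD('n) * e)"
    using S_meas by simp
  finally show ?thesis .
qed

lemma integral_mult_cube_measure:
  fixes \<mu> :: "(real^'n) measure" and h :: "real^'n \<Rightarrow> real"
  assumes fin: "finite_measure \<mu>" and sets_\<mu>: "sets \<mu> = sets borel" and h: "integrable lborel h"
  shows "integrable lborel (\<lambda>x. h x * measure \<mu> (half_open_cube x e))"
    and "integrable \<mu> (\<lambda>y. \<integral>x. indicator (cube_centres y e) x * h x \<partial>lborel)"
    and "(\<integral>x. h x * measure \<mu> (half_open_cube x e) \<partial>lborel)
           = (\<integral>y. (\<integral>x. indicator (cube_centres y e) x * h x \<partial>lborel) \<partial>\<mu>)"
proof -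
  interpret \<mu>: finite_measure \<mu> by (rule fin)
  interpret P: pair_sigma_finite lborel \<mu> ..
  define F where "F x y = indicator (cube_centres y e) x * h x" for x y
  have space_\<mu>: "space \<mu> = UNIV" using sets_eq_imp_space_eq[OF sets_\<mu>] by simp
  have sets_prod: "sets (lborel \<Otimes>\<^sub>M \<mu>) = sets borel"
    using sets_pair_measure_cong[OF sets_lborel sets_\<mu>] by (simp only: borel_prod)
  have T: "{z. snd z \<in> half_open_cube (fst z) e} \<in> sets (lborel \<Otimes>\<^sub>M \<mu>)"
    unfolding sets_prod by (rule half_open_cube_relation_in_borel)
  have F_meas: "case_prod F \<in> borel_measurable (lborel \<Otimes>\<^sub>M \<mu>)"
  proof -
    have "(\<lambda>z. indicator {z. snd z \<in> half_open_cube (fst z) e} z * h (fst z)) \<in> borel_measurable (lborel \<Otimes>\<^sub>M \<mu>)"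
      using T h by (intro borel_measurable_times borel_measurable_indicator) auto
    moreover have "case_prod F = (\<lambda>z. indicator {z. snd z \<in> half_open_cube (fst z) e} z * h (fst z))"
      by (auto simp: F_def cube_centres_def indicator_def)
    ultimately show ?thesis by simp
  qed
  have F_slice: "F x = (\<lambda>y. indicator (half_open_cube x e) y * h x)" for x
    by (auto simp: F_def cube_centres_def indicator_def)
  have integral_F_slice: "(\<integral>y. F x y \<partial>\<mu>) = h x * measure \<mu> (half_open_cube x e)" for x
    using space_\<mu> by (simp add: F_slice)
  have meas: "(\<lambda>x. measure \<mu> (half_open_cube x e)) \<in> borel_measurable borel"
  proof -
    have "(\<lambda>x. emeasure \<mu> (Pair x -` {z. snd z \<in> half_open_cube (fst z) e})) \<in> borel_measurable lborel"
      by (rule P.measurable_emeasure_Pair1[OF T])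
    then show ?thesis by (simp add: measure_def)
  qed
  have bounded_mult: "integrable lborel (\<lambda>x. g x * measure \<mu> (half_open_cube x e))"
    if "integrable lborel g" for g
    using integrable_bounded_mult[OF that, of "\<lambda>x. measure \<mu> (half_open_cube x e)" "measure \<mu> (space \<mu>)"]
      meas \<mu>.bounded_measure by (simp add: mult.commute)
  show int1: "integrable lborel (\<lambda>x. h x * measure \<mu> (half_open_cube x e))"
    using bounded_mult[OF h] .
  have F_int: "integrable (lborel \<Otimes>\<^sub>M \<mu>) (case_prod F)"
  proof (rule P.Fubini_integrable)
    show "integrable lborel (\<lambda>x. \<integral>y. norm (case_prod F (x, y)) \<partial>\<mu>)"
      using bounded_mult[of "\<lambda>x. \<bar>h x\<bar>"] h space_\<mu> by (simp add: F_slice abs_mult mult.commute)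
    have "integrable \<mu> (indicator (half_open_cube x e) :: _ \<Rightarrow> real)" for x
      using sets_\<mu> half_open_cube_in_borel
      by (intro integrable_real_indicator) (auto simp: less_top[symmetric])
    then show "AE x in lborel. integrable \<mu> (\<lambda>y. case_prod F (x, y))"
      by (simp add: F_slice)
  qed (rule F_meas)
  show "integrable \<mu> (\<lambda>y. \<integral>x. indicator (cube_centres y e) x * h x \<partial>lborel)"
    using P.integrable_snd[OF F_int] by (simp add: F_def)
  have "(\<integral>y. (\<integral>x. F x y \<partial>lborel) \<partial>\<mu>) = (\<integral>x. (\<integral>y. F x y \<partial>\<mu>) \<partial>lborel)"
    by (rule P.Fubini_integral[OF F_int])
  then show "(\<integral>x. h x * measure \<mu> (half_open_cube x e) \<partial>lborel)
           = (\<integral>y. (\<integral>x. indicator (cube_centres y e) x * h x \<partial>lborel) \<partial>\<mu>)"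
    unfolding integral_F_slice by (simp add: F_def)
qed

lemma abs_integral_cube_measure_sub_le:
  fixes \<mu> :: "(real^'n) measure" and h :: "real^'n \<Rightarrow> real"
  assumes "prob_space \<mu>" and sets_\<mu>: "sets \<mu> = sets borel" and e: "e > 0"
    and lip: "C-lipschitz_on UNIV h" and h: "integrable lborel h" and h_\<mu>: "integrable \<mu> h"
  shows "\<bar>(\<integral>x. h x * measure \<mu> (half_open_cube x e) \<partial>lborel) / (2*e)^CARD('n) - (\<integral>y. h y \<partial>\<mu>)\<bar>
           \<le> C * CARD('n) * e"
proof -
  interpret \<mu>: prob_space \<mu> by fact
  let ?c = "(2*e)^CARD('n)" and ?H = "\<lambda>y. \<integral>x. indicator (cube_centres y e) x * h x \<partial>lborel"
  note cube = integral_mult_cube_measure[OF \<mu>.finite_measure_axioms sets_\<mu> h]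
  have c: "?c > 0" using e by simp
  have "(\<integral>x. h x * measure \<mu> (half_open_cube x e) \<partial>lborel) / ?c - (\<integral>y. h y \<partial>\<mu>)
      = (\<integral>y. ?H y / ?c - h y \<partial>\<mu>)"
    using cube(2,3) h_\<mu> by simp
  also have "\<bar>\<dots>\<bar> \<le> (\<integral>y. C * CARD('n) * e \<partial>\<mu>)"
  proof (rule integral_abs_bound_integral)
    show "integrable \<mu> (\<lambda>y. ?H y / ?c - h y)" using cube(2) h_\<mu> by simp
    fix y
    show "\<bar>?H y / ?c - h y\<bar> \<le> C * CARD('n) * e"
      using c abs_integral_cube_centres_sub_le[OF e lip] by (rule abs_divide_diff_le)
  qed simp
  also have "\<dots> = C * CARD('n) * e" by (simp add: \<mu>.prob_space)
  finally show ?thesis .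
qed

section \<open>Lipschitz bumps\<close>

definition lipschitz_bump :: "('a::euclidean_space \<Rightarrow> real) \<Rightarrow> bool" where
  "lipschitz_bump h \<longleftrightarrow> (\<exists>C. C-lipschitz_on UNIV h) \<and> (\<forall>x. 0 \<le> h x) \<and> bounded {x. h x \<noteq> 0}"

lemma lipschitz_bump_continuous: "lipschitz_bump h \<Longrightarrow> continuous_on UNIV h"
  unfolding lipschitz_bump_def by (auto intro: lipschitz_on_continuous_on)

lemma lipschitz_bump_borel_measurable: "lipschitz_bump h \<Longrightarrow> h \<in> borel_measurable borel"
  by (rule borel_measurable_continuous_onI[OF lipschitz_bump_continuous])

lemma lipschitz_bump_support_subset_cball:
  assumes "lipschitz_bump h"
  obtains R where "R > 0" "{x. h x \<noteq> 0} \<subseteq> cball 0 R"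
proof -
  have "bounded {x. h x \<noteq> 0}" using assms unfolding lipschitz_bump_def by simp
  then obtain R where "R > 0" "{x. h x \<noteq> 0} \<subseteq> ball 0 R" using bounded_subset_ballD[of _ 0] by blast
  with that show ?thesis using ball_subset_cball by blast
qed

lemma lipschitz_bump_bounded:
  assumes "lipschitz_bump h"
  shows "bounded (range h)"
proof -
  obtain R where "R > 0" and R: "{x. h x \<noteq> 0} \<subseteq> cball 0 R"
    by (rule lipschitz_bump_support_subset_cball[OF assms])
  have "continuous_on (cball 0 R) h"
    using lipschitz_bump_continuous[OF assms] by (rule continuous_on_subset) simp
  then have "bounded (insert 0 (h ` cball 0 R))"
    by (simp add: compact_imp_bounded compact_continuous_image)
  moreover have "range h \<subseteq> insert 0 (h ` cball 0 R)" using R by auto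
  ultimately show ?thesis by (rule bounded_subset)
qed

lemma lipschitz_bump_abs_le:
  assumes "lipschitz_bump h"
  shows "\<exists>B. \<forall>x. \<bar>h x\<bar> \<le> B"
  using lipschitz_bump_bounded[OF assms] unfolding bounded_iff by auto

lemma integrable_lipschitz_bump_mult:
  assumes "lipschitz_bump h" "integrable lborel f"
  shows "integrable lborel (\<lambda>x. h x * f x)"
proof -
  obtain B where "\<And>x. \<bar>h x\<bar> \<le> B" using lipschitz_bump_abs_le[OF assms(1)] by blast
  then show ?thesis
    using assms lipschitz_bump_borel_measurable by (intro integrable_bounded_mult) auto
qed

lemma integrable_lipschitz_bump:
  fixes h :: "'a::euclidean_space \<Rightarrow> real"
  assumes "lipschitz_bump h"
  shows "integrable lborel h"
proof -
  obtain R where "R > 0" and R: "{x. h x \<noteq> 0} \<subseteq> cball 0 R"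
    by (rule lipschitz_bump_support_subset_cball[OF assms])
  have "integrable lborel (indicator (cball 0 R) :: 'a \<Rightarrow> real)"
    using emeasure_lborel_cball_finite[of "0::'a" R] by (intro integrable_real_indicator) auto
  then have "integrable lborel (\<lambda>x. h x * indicator (cball 0 R) x)"
    by (rule integrable_lipschitz_bump_mult[OF assms])
  moreover have "h x * indicator (cball 0 R) x = h x" for x
    using R by (auto simp: indicator_def)
  ultimately show ?thesis by simp
qed

definition tent :: "'a::real_normed_vector \<Rightarrow> real" where
  "tent x = max 0 (1 - norm x)"

lemma lipschitz_bump_tent: "lipschitz_bump (tent :: 'a::euclidean_space \<Rightarrow> real)"
  unfolding lipschitz_bump_def tent_def
proof (intro conjI exI allI)
  show "1-lipschitz_on UNIV (\<lambda>x::'a. max 0 (1 - norm x))"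
  proof (rule lipschitz_onI)
    fix x y :: 'a
    have "\<bar>norm x - norm y\<bar> \<le> norm (x - y)" by (rule norm_triangle_ineq3)
    then show "dist (max 0 (1 - norm x)) (max 0 (1 - norm y)) \<le> 1 * dist x y"
      by (simp add: dist_real_def dist_norm)
  qed simp
  have "{x::'a. max 0 (1 - norm x) \<noteq> 0} \<subseteq> cball 0 1" by auto
  then show "bounded {x::'a. max 0 (1 - norm x) \<noteq> 0}" using bounded_cball bounded_subset by blast
qed simp

lemma lipschitz_bump_infdist_compl:
  fixes U :: "'a::euclidean_space set"
  assumes "bounded U" "c \<ge> 0"
  shows "lipschitz_bump (\<lambda>x. min 1 (c * infdist x (- U)))"
  unfolding lipschitz_bump_def
proof (intro conjI exI allI)
  show "c-lipschitz_on UNIV (\<lambda>x. min 1 (c * infdist x (- U)))"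
  proof (rule lipschitz_onI)
    fix x y :: 'a
    have "\<bar>min 1 (c * infdist x (- U)) - min 1 (c * infdist y (- U))\<bar> \<le> \<bar>c * infdist x (- U) - c * infdist y (- U)\<bar>"
      by linarith
    also have "\<dots> = c * \<bar>infdist x (- U) - infdist y (- U)\<bar>"
      using assms(2) by (metis abs_mult abs_of_nonneg right_diff_distrib)
    also have "\<dots> \<le> c * dist x y"
      by (rule mult_left_mono[OF infdist_triangle_abs assms(2)])
    finally show "dist (min 1 (c * infdist x (- U))) (min 1 (c * infdist y (- U))) \<le> c * dist x y"
      by (simp add: dist_real_def)
  qed (rule assms(2))
  show "0 \<le> min 1 (c * infdist x (- U))" for x
    using assms(2) by (simp add: infdist_nonneg)
  have "min 1 (c * infdist x (- U)) = 0" if "x \<notin> U" for x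
    using that by (simp add: infdist_zero)
  then have "{x. min 1 (c * infdist x (- U)) \<noteq> 0} \<subseteq> U" by blast
  then show "bounded {x. min 1 (c * infdist x (- U)) \<noteq> 0}" using assms(1) bounded_subset by blast
qed

lemma tendsto_infdist_compl_indicator:
  fixes U :: "'a::euclidean_space set"
  assumes "open U" "bounded U"
  shows "(\<lambda>n. min 1 (real (Suc n) * infdist x (- U))) \<longlonglongrightarrow> indicator U x"
proof (cases "x \<in> U")
  case True
  have "- U \<noteq> {}" using assms(2) not_bounded_UNIV by (metis Compl_empty_eq double_compl)
  then have d: "infdist x (- U) > 0"
    using True assms(1) by (intro infdist_pos_not_in_closed) auto
  obtain N :: nat where N: "1 / infdist x (- U) < N" using reals_Archimedean2 by blast
  have "min 1 (real (Suc n) * infdist x (- U)) = 1" if "N \<le> n" for n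
  proof -
    have "1 / infdist x (- U) < real (Suc n)" using N that by linarith
    then show ?thesis using d by (simp add: field_simps)
  qed
  then have "eventually (\<lambda>n. min 1 (real (Suc n) * infdist x (- U)) = 1) sequentially"
    unfolding eventually_sequentially by blast
  then show ?thesis using True by (simp add: tendsto_eventually)
qed simp

section \<open>Identification of the limit law\<close>

locale cube_ratio_limit =
  fixes \<mu> :: "real \<Rightarrow> (real^'n) measure" and \<nu> :: "(real^'n) measure" and f :: "real^'n \<Rightarrow> real"
  assumes prob_space_\<mu>: "\<And>e. e > 0 \<Longrightarrow> prob_space (\<mu> e)"
    and sets_\<mu>: "\<And>e. e > 0 \<Longrightarrow> sets (\<mu> e) = sets borel"
    and prob_space_\<nu>: "prob_space \<nu>"
    and sets_\<nu>: "sets \<nu> = sets borel"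
    and conv: "conv_distr_at0 \<mu> \<nu>"
    and f_pos: "\<And>x. f x > 0"
    and f_int: "integrable lborel f"
    and ratio: "\<And>K \<delta>. compact K \<Longrightarrow> \<delta> > 0 \<Longrightarrow> \<forall>\<^sub>F e in at_right 0. \<forall>x\<in>K. \<forall>y\<in>K.
       \<bar>measure (\<mu> e) (half_open_cube x e) / measure (\<mu> e) (half_open_cube y e) * (f y / f x) - 1\<bar> < \<delta>"
begin

definition cube_prob :: "real \<Rightarrow> real^'n \<Rightarrow> real" where
  "cube_prob e x = measure (\<mu> e) (half_open_cube x e)"

definition cube_scale :: "real \<Rightarrow> real" where
  "cube_scale e = cube_prob e 0 / f 0"

lemma tendsto_cube_integral_div_volume:
  assumes h: "lipschitz_bump h"
  shows "((\<lambda>e. (\<integral>x. h x * cube_prob e x \<partial>lborel) / (2*e)^CARD('n)) \<longlongrightarrow> (\<integral>x. h x \<partial>\<nu>)) (at_right 0)"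
proof -
  obtain C where lip: "C-lipschitz_on UNIV h" using h unfolding lipschitz_bump_def by blast
  obtain B where B: "\<And>x. \<bar>h x\<bar> \<le> B" using lipschitz_bump_abs_le[OF h] by blast
  have h_meas: "h \<in> borel_measurable borel" by (rule lipschitz_bump_borel_measurable[OF h])
  have "((\<lambda>e. \<integral>x. h x \<partial>\<mu> e) \<longlongrightarrow> (\<integral>x. h x \<partial>\<nu>)) (at_right 0)"
    using conv lipschitz_bump_continuous[OF h] lipschitz_bump_bounded[OF h]
    unfolding conv_distr_at0_def by blast
  moreover have "((\<lambda>e. (\<integral>x. h x * cube_prob e x \<partial>lborel) / (2*e)^CARD('n) - (\<integral>x. h x \<partial>\<mu> e)) \<longlongrightarrow> 0)
      (at_right 0)"
  proof (rule Lim_null_comparison)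
    show "((\<lambda>e. C * CARD('n) * e) \<longlongrightarrow> 0) (at_right 0)"
      by (auto intro!: tendsto_eq_intros)
    show "\<forall>\<^sub>F e in at_right 0.
        norm ((\<integral>x. h x * cube_prob e x \<partial>lborel) / (2*e)^CARD('n) - (\<integral>x. h x \<partial>\<mu> e)) \<le> C * CARD('n) * e"
      using eventually_at_right_less
    proof eventually_elim
      case (elim e)
      interpret prob_space "\<mu> e" using prob_space_\<mu> elim by simp
      have "integrable (\<mu> e) h"
        using B h_meas sets_\<mu>[OF elim] by (intro integrable_const_bound[where B = B]) (auto cong: measurable_cong_sets)
      from abs_integral_cube_measure_sub_le[OF prob_space_\<mu> sets_\<mu> elim lip integrable_lipschitz_bump[OF h] this]
      show ?case using elim by (simp add: cube_prob_def)
    qed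
  qed
  ultimately have "((\<lambda>e. (\<integral>x. h x \<partial>\<mu> e) + ((\<integral>x. h x * cube_prob e x \<partial>lborel) / (2*e)^CARD('n) - (\<integral>x. h x \<partial>\<mu> e)))
      \<longlongrightarrow> (\<integral>x. h x \<partial>\<nu>) + 0) (at_right 0)"
    by (rule tendsto_add)
  then show ?thesis by simp
qed

text \<open>Since \<open>0 / 0 = 0\<close>, the ratio hypothesis at \<open>x = y = 0\<close> already forces \<open>cube_prob e 0 \<noteq> 0\<close>.\<close>
lemma eventually_cube_prob_0_pos: "\<forall>\<^sub>F e in at_right 0. cube_prob e 0 > 0"
proof -
  have "\<forall>\<^sub>F e in at_right 0. \<forall>x\<in>{0}. \<forall>y\<in>{0}.
      \<bar>measure (\<mu> e) (half_open_cube x e) / measure (\<mu> e) (half_open_cube y e) * (f y / f x) - 1\<bar> < 1"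
    by (rule ratio) auto
  then show ?thesis
  proof eventually_elim
    case (elim e)
    then have "cube_prob e 0 \<noteq> 0" using f_pos[of 0] by (auto simp: cube_prob_def)
    then show ?case by (simp add: cube_prob_def order.not_eq_order_implies_strict)
  qed
qed

lemma eventually_cube_scale_pos: "\<forall>\<^sub>F e in at_right 0. cube_scale e > 0"
  using eventually_cube_prob_0_pos by eventually_elim (simp add: cube_scale_def f_pos)

lemma eventually_abs_cube_prob_sub_le:
  assumes "compact K" "0 \<in> K" "d > 0"
  shows "\<forall>\<^sub>F e in at_right 0. \<forall>x\<in>K. \<bar>cube_prob e x - cube_scale e * f x\<bar> \<le> d * (cube_scale e * f x)"
  using ratio[OF assms(1,3)] eventually_cube_prob_0_pos
proof eventually_elim
  case (elim e)
  have A: "cube_scale e > 0" using elim(2) f_pos[of 0] by (simp add: cube_scale_def)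
  show ?case
  proof
    fix x assume x: "x \<in> K"
    define r where "r = cube_prob e x / cube_prob e 0 * (f 0 / f x)"
    have "\<bar>r - 1\<bar> < d" using elim(1) x assms(2) by (auto simp: r_def cube_prob_def)
    moreover have "cube_prob e x - cube_scale e * f x = (cube_scale e * f x) * (r - 1)"
      using elim(2) f_pos[of 0] f_pos[of x] by (simp add: r_def cube_scale_def field_simps)
    ultimately show "\<bar>cube_prob e x - cube_scale e * f x\<bar> \<le> d * (cube_scale e * f x)"
      using A f_pos[of x] by (simp add: abs_mult mult.commute mult_left_mono)
  qed
qed

lemma eventually_abs_integral_cube_prob_sub_le:
  assumes h: "lipschitz_bump h" and d: "d > 0"
  shows "\<forall>\<^sub>F e in at_right 0. \<bar>(\<integral>x. h x * cube_prob e x \<partial>lborel) - cube_scale e * (\<integral>x. h x * f x \<partial>lborel)\<bar>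
           \<le> cube_scale e * (d * (\<integral>x. h x * f x \<partial>lborel))"
proof -
  have h_nonneg: "\<And>x. 0 \<le> h x" using h by (simp add: lipschitz_bump_def)
  have hf_int: "integrable lborel (\<lambda>x. h x * f x)" by (rule integrable_lipschitz_bump_mult[OF h f_int])
  obtain R where "R > 0" and R: "{x. h x \<noteq> 0} \<subseteq> cball 0 R"
    by (rule lipschitz_bump_support_subset_cball[OF h])
  then have "0 \<in> cball (0::real^'n) R" by simp
  from eventually_abs_cube_prob_sub_le[OF compact_cball this d] eventually_at_right_less
  show ?thesis
  proof eventually_elim
    case (elim e)
    have pointwise: "\<bar>h x * cube_prob e x - cube_scale e * (h x * f x)\<bar> \<le> d * cube_scale e * (h x * f x)" for x
    proof (cases "h x = 0")
      case False
      then have "h x * \<bar>cube_prob e x - cube_scale e * f x\<bar> \<le> h x * (d * (cube_scale e * f x))"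
        using elim(1) R h_nonneg by (intro mult_left_mono) auto
      moreover have "h x * cube_prob e x - cube_scale e * (h x * f x) = h x * (cube_prob e x - cube_scale e * f x)"
        by (simp add: algebra_simps)
      ultimately show ?thesis using h_nonneg[of x] by (simp add: abs_mult mult.assoc mult.left_commute)
    qed simp
    have hp_int: "integrable lborel (\<lambda>x. h x * cube_prob e x)"
      using integral_mult_cube_measure(1)[OF _ sets_\<mu> integrable_lipschitz_bump[OF h]] prob_space_\<mu> elim(2)
      by (simp add: cube_prob_def prob_space.finite_measure)
    have "\<bar>(\<integral>x. h x * cube_prob e x \<partial>lborel) - cube_scale e * (\<integral>x. h x * f x \<partial>lborel)\<bar>
        = \<bar>\<integral>x. h x * cube_prob e x - cube_scale e * (h x * f x) \<partial>lborel\<bar>"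
      using hp_int hf_int by simp
    also have "\<dots> \<le> (\<integral>x. d * cube_scale e * (h x * f x) \<partial>lborel)"
      using hp_int hf_int pointwise by (intro integral_abs_bound_integral) auto
    also have "\<dots> = cube_scale e * (d * (\<integral>x. h x * f x \<partial>lborel))" by simp
    finally show ?case .
  qed
qed

lemma tendsto_cube_integral_div_scale:
  assumes h: "lipschitz_bump h"
  shows "((\<lambda>e. (\<integral>x. h x * cube_prob e x \<partial>lborel) / cube_scale e) \<longlongrightarrow> (\<integral>x. h x * f x \<partial>lborel)) (at_right 0)"
proof (rule tendstoI)
  fix \<epsilon> :: real assume \<epsilon>: "\<epsilon> > 0"
  define I where "I = (\<integral>x. h x * f x \<partial>lborel)"
  have I: "I \<ge> 0" unfolding I_def using h f_pos by (simp add: lipschitz_bump_def less_imp_le)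
  define d where "d = \<epsilon> / (I + 1)"
  have d: "d > 0" and "d * I < \<epsilon>" using \<epsilon> I by (simp_all add: d_def field_simps)
  from eventually_abs_integral_cube_prob_sub_le[OF h d] eventually_cube_scale_pos
  show "\<forall>\<^sub>F e in at_right 0. dist ((\<integral>x. h x * cube_prob e x \<partial>lborel) / cube_scale e) I < \<epsilon>"
  proof eventually_elim
    case (elim e)
    then have "\<bar>(\<integral>x. h x * cube_prob e x \<partial>lborel) / cube_scale e - I\<bar> \<le> d * I"
      unfolding I_def by (intro abs_divide_diff_le) auto
    then show ?case using \<open>d * I < \<epsilon>\<close> by (simp add: dist_real_def)
  qed
qed

lemma integral_tent_mult_f_pos: "(\<integral>x. tent x * f x \<partial>lborel) > 0"
proof -
  have int: "integrable lborel (\<lambda>x. tent x * f x)"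
    by (rule integrable_lipschitz_bump_mult[OF lipschitz_bump_tent f_int])
  have nonneg: "AE x in lborel. 0 \<le> tent x * f x"
    using f_pos by (intro AE_I2) (simp add: tent_def less_imp_le)
  have "(\<integral>x. tent x * f x \<partial>lborel) \<noteq> 0"
  proof
    assume "(\<integral>x. tent x * f x \<partial>lborel) = 0"
    then have "AE x in lborel. tent x * f x = 0" using integral_nonneg_eq_0_iff_AE[OF int nonneg] by simp
    moreover have "tent x * f x \<noteq> 0" if "x \<in> ball 0 1" for x
      using that f_pos[of x] by (simp add: tent_def)
    ultimately have "AE x in lborel. x \<notin> ball (0::real^'n) 1" by (auto elim: AE_mp)
    then have "emeasure lborel (ball (0::real^'n) 1) = 0"
      by (subst (asm) AE_iff_measurable[of "ball 0 1"]) auto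
    then show False using content_ball_pos[of 1 "0::real^'n"] by (simp add: measure_def)
  qed
  then show ?thesis using integral_nonneg_AE[OF nonneg] by simp
qed

text \<open>This is the limit of \<open>cube_scale e / (2*e)^CARD('n)\<close>; the tent serves only as one bump
  with positive integral against \<open>f\<close>.\<close>
definition scale_limit :: real where
  "scale_limit = (\<integral>x. tent x \<partial>\<nu>) / (\<integral>x. tent x * f x \<partial>lborel)"

lemma scale_limit_nonneg: "scale_limit \<ge> 0"
  unfolding scale_limit_def using integral_tent_mult_f_pos
  by (intro divide_nonneg_pos Bochner_Integration.integral_nonneg) (auto simp: tent_def)

lemma tendsto_cube_scale_div_volume: "((\<lambda>e. cube_scale e / (2*e)^CARD('n)) \<longlongrightarrow> scale_limit) (at_right 0)"
proof -
  let ?G = "\<lambda>e. (\<integral>x. tent x * cube_prob e x \<partial>lborel) / (2*e)^CARD('n)"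
  let ?J = "\<lambda>e. (\<integral>x. tent x * cube_prob e x \<partial>lborel) / cube_scale e"
  have J: "(?J \<longlongrightarrow> (\<integral>x. tent x * f x \<partial>lborel)) (at_right 0)"
    by (rule tendsto_cube_integral_div_scale[OF lipschitz_bump_tent])
  have "((\<lambda>e. ?G e / ?J e) \<longlongrightarrow> scale_limit) (at_right 0)"
    unfolding scale_limit_def using integral_tent_mult_f_pos
    by (intro tendsto_divide tendsto_cube_integral_div_volume[OF lipschitz_bump_tent] J) auto
  moreover have "\<forall>\<^sub>F e in at_right 0. ?G e / ?J e = cube_scale e / (2*e)^CARD('n)"
    using order_tendstoD(1)[OF J integral_tent_mult_f_pos] eventually_cube_scale_pos
    by eventually_elim auto
  ultimately show ?thesis by (rule Lim_transform_eventually)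
qed

lemma integral_\<nu>_lipschitz_bump:
  assumes h: "lipschitz_bump h"
  shows "(\<integral>x. h x \<partial>\<nu>) = scale_limit * (\<integral>x. h x * f x \<partial>lborel)"
proof -
  let ?J = "\<lambda>e. (\<integral>x. h x * cube_prob e x \<partial>lborel) / cube_scale e"
  have "((\<lambda>e. cube_scale e / (2*e)^CARD('n) * ?J e) \<longlongrightarrow> scale_limit * (\<integral>x. h x * f x \<partial>lborel)) (at_right 0)"
    by (intro tendsto_mult tendsto_cube_scale_div_volume tendsto_cube_integral_div_scale[OF h])
  moreover have "\<forall>\<^sub>F e in at_right 0.
      cube_scale e / (2*e)^CARD('n) * ?J e = (\<integral>x. h x * cube_prob e x \<partial>lborel) / (2*e)^CARD('n)"
    using eventually_cube_scale_pos by eventually_elim auto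
  ultimately have "((\<lambda>e. (\<integral>x. h x * cube_prob e x \<partial>lborel) / (2*e)^CARD('n))
      \<longlongrightarrow> scale_limit * (\<integral>x. h x * f x \<partial>lborel)) (at_right 0)"
    by (rule Lim_transform_eventually)
  with tendsto_cube_integral_div_volume[OF h] show ?thesis
    by (intro tendsto_unique[of "at_right (0::real)"]) auto
qed

lemma measure_\<nu>_open:
  assumes U: "open U" "bounded U"
  shows "measure \<nu> U = scale_limit * (\<integral>x. indicator U x * f x \<partial>lborel)"
proof -
  interpret \<nu>: prob_space \<nu> by (rule prob_space_\<nu>)
  define s where "s n x = min 1 (real (Suc n) * infdist x (- U))" for n x
  have bump: "lipschitz_bump (s n)" for n
    unfolding s_def using U(2) by (rule lipschitz_bump_infdist_compl) simp
  have s_meas: "s n \<in> borel_measurable borel" for n by (rule lipschitz_bump_borel_measurable[OF bump])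
  have s01: "0 \<le> s n x \<and> s n x \<le> 1" for n x by (simp add: s_def infdist_nonneg)
  have lim: "(\<lambda>n. s n x) \<longlonglongrightarrow> indicator U x" for x
    unfolding s_def using U by (rule tendsto_infdist_compl_indicator)
  have lim_\<nu>: "(\<lambda>n. \<integral>x. s n x \<partial>\<nu>) \<longlonglongrightarrow> (\<integral>x. indicator U x \<partial>\<nu>)"
  proof (rule integral_dominated_convergence[where w = "\<lambda>_. 1"])
    show "AE x in \<nu>. norm (s n x) \<le> 1" for n using s01 by (intro AE_I2) auto
  qed (use sets_\<nu> s_meas lim U in \<open>auto cong: measurable_cong_sets\<close>)
  have lim_f: "(\<lambda>n. \<integral>x. s n x * f x \<partial>lborel) \<longlonglongrightarrow> (\<integral>x. indicator U x * f x \<partial>lborel)"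
  proof (rule integral_dominated_convergence[where w = f])
    show "AE x in lborel. norm (s n x * f x) \<le> f x" for n
      using s01 f_pos by (intro AE_I2) (auto simp: abs_mult less_imp_le intro!: mult_left_le_one_le)
    show "AE x in lborel. (\<lambda>n. s n x * f x) \<longlonglongrightarrow> indicator U x * f x"
      using lim by (intro AE_I2 tendsto_mult_right)
  qed (use f_int s_meas U in auto)
  have "(\<integral>x. indicator U x \<partial>\<nu>) = scale_limit * (\<integral>x. indicator U x * f x \<partial>lborel)"
    using lim_\<nu> unfolding integral_\<nu>_lipschitz_bump[OF bump] by (rule LIMSEQ_unique[OF _ tendsto_mult_left[OF lim_f]])
  then show ?thesis using sets_\<nu> U by simp
qed

lemma \<nu>_eq_density: "\<nu> = density lborel (\<lambda>x. ennreal (scale_limit * f x))"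
proof (rule measure_eqI_generator_eq[where E = "range (\<lambda>(a, b). box a b)" and \<Omega> = UNIV
      and A = "\<lambda>n. box (- (real n *\<^sub>R One)) (real n *\<^sub>R One)"])
  interpret \<nu>: prob_space \<nu> by (rule prob_space_\<nu>)
  show "Int_stable (range (\<lambda>(a, b). box a b :: (real^'n) set))"
    by (auto simp: Int_stable_def box_Int_box)
  show "sets \<nu> = sigma_sets UNIV (range (\<lambda>(a, b). box a b))"
    using sets_\<nu> by (simp add: borel_eq_box)
  show "sets (density lborel (\<lambda>x. ennreal (scale_limit * f x))) = sigma_sets UNIV (range (\<lambda>(a, b). box a b))"
    by (simp add: borel_eq_box)
  show "(\<Union>n. box (- (real n *\<^sub>R One)) (real n *\<^sub>R One)) = (UNIV :: (real^'n) set)"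
    by (rule UN_box_eq_UNIV)
  fix B assume "B \<in> range (\<lambda>(a, b). box a b :: (real^'n) set)"
  then obtain a b where B: "B = box a b" by auto
  have f_meas: "f \<in> borel_measurable lborel" using f_int by auto
  have "emeasure \<nu> B = ennreal (scale_limit * (\<integral>x. indicator B x * f x \<partial>lborel))"
    unfolding \<nu>.emeasure_eq_measure B by (simp add: measure_\<nu>_open open_box bounded_box)
  also have "\<dots> = ennreal (\<integral>x. scale_limit * (indicator B x * f x) \<partial>lborel)" by simp
  also have "\<dots> = (\<integral>\<^sup>+x. ennreal (scale_limit * (indicator B x * f x)) \<partial>lborel)"
    using integrable_real_mult_indicator[OF _ f_int, of B] scale_limit_nonneg f_pos B
    by (intro nn_integral_eq_integral[symmetric]) (auto simp: indicator_def less_imp_le mult.commute)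
  also have "\<dots> = (\<integral>\<^sup>+x. ennreal (scale_limit * f x) * indicator B x \<partial>lborel)"
    by (intro nn_integral_cong) (simp add: indicator_def)
  also have "\<dots> = emeasure (density lborel (\<lambda>x. ennreal (scale_limit * f x))) B"
    using f_meas B by (simp add: emeasure_density)
  finally show "emeasure \<nu> B = emeasure (density lborel (\<lambda>x. ennreal (scale_limit * f x))) B" .
qed (auto simp: finite_measure.emeasure_eq_measure[OF prob_space.finite_measure[OF prob_space_\<nu>]])

lemma scale_limit_mult_integral: "scale_limit * (\<integral>x. f x \<partial>lborel) = 1"
proof -
  interpret \<nu>: prob_space \<nu> by (rule prob_space_\<nu>)
  have f_meas: "f \<in> borel_measurable lborel" using f_int by auto
  have "1 = emeasure \<nu> UNIV"
    using \<nu>.emeasure_space_1 sets_eq_imp_space_eq[OF sets_\<nu>] by simp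
  also have "\<dots> = (\<integral>\<^sup>+x. ennreal (scale_limit * f x) \<partial>lborel)"
    using f_meas by (subst \<nu>_eq_density) (simp add: emeasure_density)
  also have "\<dots> = ennreal (scale_limit * (\<integral>x. f x \<partial>lborel))"
    using f_int scale_limit_nonneg f_pos by (subst nn_integral_eq_integral) (auto simp: less_imp_le)
  finally show ?thesis
    using scale_limit_nonneg f_pos by (simp add: less_imp_le)
qed

theorem \<nu>_eq_normalised_density: "\<nu> = density lborel (\<lambda>x. ennreal (f x / (\<integral>z. f z \<partial>lborel)))"
proof -
  have "(\<integral>z. f z \<partial>lborel) \<noteq> 0" using scale_limit_mult_integral by auto
  then have "scale_limit * f x = f x / (\<integral>z. f z \<partial>lborel)" for x
    using scale_limit_mult_integral by (simp add: eq_divide_eq mult.commute mult.left_commute)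
  then show ?thesis using \<nu>_eq_density by simp
qed

end

theorem lemma11p2:
  fixes M :: "real \<Rightarrow> 'a measure" and X :: "real \<Rightarrow> 'a \<Rightarrow> real^'n"
    and M0 :: "'b measure" and X0 :: "'b \<Rightarrow> real^'n"
    and f :: "real^'n \<Rightarrow> real"
  assumes probs: "\<And>e. e > 0 \<Longrightarrow> prob_space (M e)"
    and rvs: "\<And>e. e > 0 \<Longrightarrow> X e \<in> borel_measurable (M e)"
    and prob0: "prob_space M0"
    and rv0: "X0 \<in> borel_measurable M0"
    and conv: "conv_distr_at0 (\<lambda>e. distr (M e) borel (X e)) (distr M0 borel X0)"
    and f_cont: "continuous_on UNIV f"
    and f_pos: "\<And>x. f x > 0"
    and f_int: "integrable lborel f"
    and ratio: "\<And>K. compact K \<Longrightarrow>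
       (\<forall>\<delta>>0. \<forall>\<^sub>F e in at_right 0. \<forall>x\<in>K. \<forall>y\<in>K.
          \<bar>(measure (M e) (X e -` half_open_cube x e \<inter> space (M e))
             / measure (M e) (X e -` half_open_cube y e \<inter> space (M e)))
           * (f y / f x) - 1\<bar> < \<delta>)"
  shows "absolutely_continuous lborel (distr M0 lborel X0) \<and>
         distributed M0 lborel X0 (\<lambda>x. ennreal (f x / (\<integral>z. f z \<partial>lborel)))"
proof -
  let ?\<mu> = "\<lambda>e. distr (M e) borel (X e)" and ?\<nu> = "distr M0 borel X0"
  let ?g = "\<lambda>x. ennreal (f x / (\<integral>z. f z \<partial>lborel))"
  have "cube_ratio_limit ?\<mu> ?\<nu> f"
  proof (rule cube_ratio_limit.intro)
    fix K :: "(real^'n) set" and \<delta> :: real assume K: "compact K" and \<delta>: "\<delta> > 0"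
    have "\<forall>\<^sub>F e in at_right 0. \<forall>x\<in>K. \<forall>y\<in>K.
        \<bar>measure (M e) (X e -` half_open_cube x e \<inter> space (M e))
          / measure (M e) (X e -` half_open_cube y e \<inter> space (M e)) * (f y / f x) - 1\<bar> < \<delta>"
      using ratio[OF K] \<delta> by simp
    with eventually_at_right_less show "\<forall>\<^sub>F e in at_right 0. \<forall>x\<in>K. \<forall>y\<in>K.
        \<bar>measure (?\<mu> e) (half_open_cube x e) / measure (?\<mu> e) (half_open_cube y e) * (f y / f x) - 1\<bar> < \<delta>"
      by eventually_elim (simp add: measure_distr rvs half_open_cube_in_borel)
  next
    fix e :: real assume "e > 0"
    then show "prob_space (?\<mu> e)" using probs rvs by (metis prob_space.prob_space_distr)
  next
    show "prob_space ?\<nu>" using prob0 rv0 by (rule prob_space.prob_space_distr)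
  qed (simp_all add: conv f_pos f_int)
  then have density: "?\<nu> = density lborel ?g"
    by (rule cube_ratio_limit.\<nu>_eq_normalised_density)
  have "distr M0 lborel X0 = ?\<nu>"
    using rv0 by (intro measure_eqI) (simp_all add: emeasure_distr)
  moreover have "?g \<in> borel_measurable lborel" using f_int by auto
  ultimately show ?thesis
    using density rv0 by (simp add: distributed_def absolutely_continuousI_density)
qed

end
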